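(* Let a shallow network be given and let $\theta\in\Theta\setminus\mathcal{E}(\mathcal{X})$ be a redundant parameter. Then there exists a straight line $\ell\subseteq\Theta$ containing $\theta$ such that for all $\vartheta\in\ell$, $\Psi_\vartheta=\Psi_\theta$ on $\mathcal{X}$.
   Context: Shallow network: finite pairwise disjoint sets $V_0,V_1,V_2$ and a measurable activation $\psi:\mathbb{R}\to\mathbb{R}$; $E=(V_0\times V_1)\cup(V_1\times V_2)$; $\Theta=\mathbb{R}^E\times\mathbb{R}^{V_1\cup V_2}$, $\theta=(w,\beta)$; response $(\Psi_\theta(x))_l=\beta_l+\sum_{j\in V_1}\psi(\beta_j+\sum_{i\in V_0}x_iw_{ij})w_{jl}$; $w_{j\bullet}=(w_{jl})_{l\in V_2}$. $\mathcal{X}\subseteq\mathbb{R}^{V_0}$ is the support of the input distribution. $\theta$ is efficient if (a) $w_{k\bullet}\not\equiv0$ for all $k\in V_1$ and (b) the only $(\lambda_j)_{j\in V_1\cup\{\emptyset\}}$ with $\lambda_\emptyset+\sum_{j\in V_1}\lambda_j\psi(\beta_j+\sum_{i\in V_0}x_iw_{ij})=0$ for all $x\in\mathcal{X}$ is $\lambda\equiv0$; $\mathcal{E}(\mathcal{X})$ is the set of efficient parameters, and non-efficient parameters are called redundant. *)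

theory Defs
  imports "HOL-Analysis.Analysis"
begin

text \<open>Parameters theta = (w, beta) with w :: 'v => 'v => real (weights on edges) and
beta :: 'v => real (biases on V1 and V2).  Inputs x :: 'v => real, only coordinates in V0 matter.\<close>

definition edges :: "'v set \<Rightarrow> 'v set \<Rightarrow> 'v set \<Rightarrow> ('v \<times> 'v) set" where
  "edges V0 V1 V2 = (V0 \<times> V1) \<union> (V1 \<times> V2)"

text \<open>The parameter space Theta = R^E x R^(V1 u V2), realised as the linear subspace of
pairs of functions vanishing outside E resp. outside V1 u V2.\<close>
definition Theta :: "'v set \<Rightarrow> 'v set \<Rightarrow> 'v set \<Rightarrow> (('v \<Rightarrow> 'v \<Rightarrow> real) \<times> ('v \<Rightarrow> real)) set" where
  "Theta V0 V1 V2 = {(w, \<beta>). (\<forall>i j. (i, j) \<notin> edges V0 V1 V2 \<longrightarrow> w i j = 0)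
                              \<and> (\<forall>k. k \<notin> V1 \<union> V2 \<longrightarrow> \<beta> k = 0)}"

text \<open>Network response (Psi_theta(x))_l, meaningful for l in V2.\<close>
definition response :: "'v set \<Rightarrow> 'v set \<Rightarrow> (real \<Rightarrow> real) \<Rightarrow>
     (('v \<Rightarrow> 'v \<Rightarrow> real) \<times> ('v \<Rightarrow> real)) \<Rightarrow> ('v \<Rightarrow> real) \<Rightarrow> 'v \<Rightarrow> real" where
  "response V0 V1 \<psi> \<theta> x l =
     snd \<theta> l + (\<Sum>j\<in>V1. \<psi> (snd \<theta> j + (\<Sum>i\<in>V0. x i * fst \<theta> i j)) * fst \<theta> j l)"

definition efficient :: "'v set \<Rightarrow> 'v set \<Rightarrow> 'v set \<Rightarrow> (real \<Rightarrow> real) \<Rightarrow> ('v \<Rightarrow> real) set \<Rightarrow>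
     (('v \<Rightarrow> 'v \<Rightarrow> real) \<times> ('v \<Rightarrow> real)) \<Rightarrow> bool" where
  "efficient V0 V1 V2 \<psi> X \<theta> \<longleftrightarrow>
     (\<forall>k\<in>V1. \<exists>l\<in>V2. fst \<theta> k l \<noteq> 0) \<and>
     (\<forall>(c0::real) (c::'v \<Rightarrow> real).
        (\<forall>x\<in>X. c0 + (\<Sum>j\<in>V1. c j * \<psi> (snd \<theta> j + (\<Sum>i\<in>V0. x i * fst \<theta> i j))) = 0)
        \<longrightarrow> c0 = 0 \<and> (\<forall>j\<in>V1. c j = 0))"

end

theory Submission
  imports Defs
begin

text \<open>A redundant parameter either has a hidden unit with no outgoing weight, whose bias can then
be moved freely, or a nontrivial affine relation \<open>c\<^sub>0 + \<Sum>\<^sub>j c\<^sub>j \<phi>\<^sub>j = 0\<close> among the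
hidden-unit outputs \<open>\<phi>\<^sub>j\<close> on \<open>X\<close>; then adding \<open>t c\<^sub>j\<close> to every outgoing weight of unit \<open>j\<close>
and \<open>t c\<^sub>0\<close> to every output bias changes each output by \<open>t (c\<^sub>0 + \<Sum>\<^sub>j c\<^sub>j \<phi>\<^sub>j) = 0\<close>.\<close>

definition hidden_unit ::
    "'v set \<Rightarrow> (real \<Rightarrow> real) \<Rightarrow> ('v \<Rightarrow> 'v \<Rightarrow> real) \<times> ('v \<Rightarrow> real) \<Rightarrow> ('v \<Rightarrow> real) \<Rightarrow> 'v \<Rightarrow> real"
  where "hidden_unit V0 \<psi> \<theta> x j = \<psi> (snd \<theta> j + (\<Sum>i\<in>V0. x i * fst \<theta> i j))"

definition param_line ::
    "('v \<Rightarrow> 'v \<Rightarrow> real) \<times> ('v \<Rightarrow> real) \<Rightarrow> ('v \<Rightarrow> 'v \<Rightarrow> real) \<times> ('v \<Rightarrow> real) \<Rightarrow> real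
     \<Rightarrow> ('v \<Rightarrow> 'v \<Rightarrow> real) \<times> ('v \<Rightarrow> real)"
  where "param_line \<theta> d t = (\<lambda>i j. fst \<theta> i j + t * fst d i j, \<lambda>k. snd \<theta> k + t * snd d k)"

definition bias_direction :: "'v \<Rightarrow> ('v \<Rightarrow> 'v \<Rightarrow> real) \<times> ('v \<Rightarrow> real)"
  where "bias_direction k = (\<lambda>_ _. 0, (\<lambda>_. 0)(k := 1))"

definition output_direction ::
    "'v set \<Rightarrow> 'v set \<Rightarrow> real \<Rightarrow> ('v \<Rightarrow> real) \<Rightarrow> ('v \<Rightarrow> 'v \<Rightarrow> real) \<times> ('v \<Rightarrow> real)"
  where "output_direction V1 V2 c0 c =
    (\<lambda>j l. if j \<in> V1 \<and> l \<in> V2 then c j else 0, \<lambda>l. if l \<in> V2 then c0 else 0)"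

lemma response_hidden_unit:
  "response V0 V1 \<psi> \<theta> x l = snd \<theta> l + (\<Sum>j\<in>V1. hidden_unit V0 \<psi> \<theta> x j * fst \<theta> j l)"
  by (simp add: response_def hidden_unit_def)

lemma efficient_iff_hidden_unit:
  "efficient V0 V1 V2 \<psi> X \<theta> \<longleftrightarrow>
     (\<forall>k\<in>V1. \<exists>l\<in>V2. fst \<theta> k l \<noteq> 0) \<and>
     (\<forall>c0 c. (\<forall>x\<in>X. c0 + (\<Sum>j\<in>V1. c j * hidden_unit V0 \<psi> \<theta> x j) = 0)
        \<longrightarrow> c0 = 0 \<and> (\<forall>j\<in>V1. c j = 0))"
  by (simp add: efficient_def hidden_unit_def)

lemma fst_param_line [simp]: "fst (param_line \<theta> d t) i j = fst \<theta> i j + t * fst d i j"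
  by (simp add: param_line_def)

lemma snd_param_line [simp]: "snd (param_line \<theta> d t) k = snd \<theta> k + t * snd d k"
  by (simp add: param_line_def)

lemma hidden_unit_param_line:
  assumes "snd d j = 0" "\<forall>i\<in>V0. fst d i j = 0"
  shows "hidden_unit V0 \<psi> (param_line \<theta> d t) x j = hidden_unit V0 \<psi> \<theta> x j"
  using assms by (simp add: hidden_unit_def)

lemma response_param_line_output_layer:
  assumes "\<forall>j\<in>V1. snd d j = 0 \<and> (\<forall>i\<in>V0. fst d i j = 0)"
  shows "response V0 V1 \<psi> (param_line \<theta> d t) x l =
    response V0 V1 \<psi> \<theta> x l + t * (snd d l + (\<Sum>j\<in>V1. hidden_unit V0 \<psi> \<theta> x j * fst d j l))"
proof -
  have "(\<Sum>j\<in>V1. hidden_unit V0 \<psi> (param_line \<theta> d t) x j * fst (param_line \<theta> d t) j l)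
      = (\<Sum>j\<in>V1. hidden_unit V0 \<psi> \<theta> x j * fst \<theta> j l + t * (hidden_unit V0 \<psi> \<theta> x j * fst d j l))"
    using assms by (intro sum.cong) (simp_all add: hidden_unit_param_line algebra_simps)
  then show ?thesis
    by (simp add: response_hidden_unit sum.distrib sum_distrib_left algebra_simps)
qed

lemma response_param_line_bias_direction:
  assumes "k \<in> V1" "\<forall>l\<in>V2. fst \<theta> k l = 0" "V1 \<inter> V2 = {}" "l \<in> V2"
  shows "response V0 V1 \<psi> (param_line \<theta> (bias_direction k) t) x l = response V0 V1 \<psi> \<theta> x l"
proof -
  have "l \<noteq> k" using assms by blast
  moreover have dead_term: "hidden_unit V0 \<psi> (param_line \<theta> (bias_direction k) t) x j * fst \<theta> j l
      = hidden_unit V0 \<psi> \<theta> x j * fst \<theta> j l" if "j \<in> V1" for j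
  proof (cases "j = k")
    case False
    then show ?thesis by (simp add: hidden_unit_param_line bias_direction_def)
  qed (use assms in simp)
  ultimately show ?thesis
    using sum.cong[OF refl dead_term] by (simp add: response_hidden_unit bias_direction_def)
qed

lemma response_param_line_output_direction:
  assumes "V0 \<inter> V1 = {}" "V1 \<inter> V2 = {}" "l \<in> V2"
    and "c0 + (\<Sum>j\<in>V1. c j * hidden_unit V0 \<psi> \<theta> x j) = 0"
  shows "response V0 V1 \<psi> (param_line \<theta> (output_direction V1 V2 c0 c) t) x l
    = response V0 V1 \<psi> \<theta> x l"
proof -
  have "\<forall>j\<in>V1. snd (output_direction V1 V2 c0 c) j = 0 \<and>
      (\<forall>i\<in>V0. fst (output_direction V1 V2 c0 c) i j = 0)"
    using assms(1,2) by (auto simp: output_direction_def)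
  moreover have "snd (output_direction V1 V2 c0 c) l +
      (\<Sum>j\<in>V1. hidden_unit V0 \<psi> \<theta> x j * fst (output_direction V1 V2 c0 c) j l) = 0"
    using assms(3,4) by (simp add: output_direction_def mult.commute)
  ultimately show ?thesis by (simp add: response_param_line_output_layer)
qed

lemma bias_direction_in_Theta: "k \<in> V1 \<Longrightarrow> bias_direction k \<in> Theta V0 V1 V2"
  by (auto simp: Theta_def bias_direction_def)

lemma bias_direction_nonzero: "bias_direction k \<noteq> (\<lambda>_ _. 0, \<lambda>_. 0)"
  by (auto simp: bias_direction_def fun_eq_iff)

lemma output_direction_in_Theta: "output_direction V1 V2 c0 c \<in> Theta V0 V1 V2"
  by (auto simp: Theta_def edges_def output_direction_def)

lemma output_direction_nonzero:
  assumes "V2 \<noteq> {}" "c0 \<noteq> 0 \<or> (\<exists>j\<in>V1. c j \<noteq> 0)"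
  shows "output_direction V1 V2 c0 c \<noteq> (\<lambda>_ _. 0, \<lambda>_. 0)"
  using assms by (auto simp: output_direction_def fun_eq_iff)

theorem theorem4p1:
  fixes V0 V1 V2 :: "'v set" and \<psi> :: "real \<Rightarrow> real" and X :: "('v \<Rightarrow> real) set"
    and \<theta> :: "('v \<Rightarrow> 'v \<Rightarrow> real) \<times> ('v \<Rightarrow> real)"
  assumes "finite V0" "finite V1" "finite V2"
    and "V0 \<inter> V1 = {}" "V0 \<inter> V2 = {}" "V1 \<inter> V2 = {}"
    and "\<psi> \<in> borel_measurable borel"
    and "X \<noteq> {}" "\<forall>x\<in>X. \<forall>i. i \<notin> V0 \<longrightarrow> x i = 0"
    and "\<theta> \<in> Theta V0 V1 V2"
    and "\<not> efficient V0 V1 V2 \<psi> X \<theta>"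
  shows "\<exists>d\<in>Theta V0 V1 V2. d \<noteq> (\<lambda>_ _. 0, \<lambda>_. 0) \<and>
           (\<forall>t::real. \<forall>x\<in>X. \<forall>l\<in>V2.
              response V0 V1 \<psi> (\<lambda>i j. fst \<theta> i j + t * fst d i j, \<lambda>k. snd \<theta> k + t * snd d k) x l
              = response V0 V1 \<psi> \<theta> x l)"
proof -
  have "\<exists>d\<in>Theta V0 V1 V2. d \<noteq> (\<lambda>_ _. 0, \<lambda>_. 0) \<and>
      (\<forall>t. \<forall>x\<in>X. \<forall>l\<in>V2. response V0 V1 \<psi> (param_line \<theta> d t) x l = response V0 V1 \<psi> \<theta> x l)"
  proof (cases "\<exists>k\<in>V1. \<forall>l\<in>V2. fst \<theta> k l = 0")
    case True
    then obtain k where "k \<in> V1" "\<forall>l\<in>V2. fst \<theta> k l = 0" by blast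
    with assms(6) show ?thesis
      by (intro bexI[of _ "bias_direction k"] conjI bias_direction_nonzero allI ballI
          response_param_line_bias_direction bias_direction_in_Theta) auto
  next
    case False
    then obtain c0 c where rel: "\<forall>x\<in>X. c0 + (\<Sum>j\<in>V1. c j * hidden_unit V0 \<psi> \<theta> x j) = 0"
      and nontrivial: "c0 \<noteq> 0 \<or> (\<exists>j\<in>V1. c j \<noteq> 0)"
      using assms(11) by (auto simp: efficient_iff_hidden_unit)
    have "V2 \<noteq> {}" \<comment> \<open>else \<open>V1 = {}\<close>, and the relation at any \<open>x \<in> X\<close> gives \<open>c0 = 0\<close>\<close>
      using False rel nontrivial \<open>X \<noteq> {}\<close> by auto
    with nontrivial show ?thesis
      using assms(4,6) rel
      by (intro bexI[of _ "output_direction V1 V2 c0 c"] conjI output_direction_nonzero allI ballI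
          response_param_line_output_direction output_direction_in_Theta) auto
  qed
  then show ?thesis by (simp add: param_line_def)
qed

end
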